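(* Let $f:\mathbb{R}^n\to\mathbb{R}$ be convex and differentiable with $\|\nabla f(x)-\nabla f(y)\|_2\le L\|x-y\|_2$, attaining its minimum $f_*$ at $x_*$. Run the mirror triangle method with inexact directional derivatives (see context) from $x_0$, let $\frac12P_0^2=\frac12\|x_0-x_*\|_L^2+(1-\frac1n)(f(x_0)-f_* )$, fix $\varepsilon>0$, let $N=\lceil\frac{\sqrt2nP_0}{\sqrt\varepsilon}+1-2n\rceil\ge1$ and $\delta\le\min\{\frac{\varepsilon^{3/4}\sqrt L}{4\sqrt[4]2\sqrt{nP_0}},\frac{\varepsilon^{3/2}\sqrt L}{96\sqrt nP_0^2}\}$. Then with $R_K=\|u_K-x_*\|_L$, $$\frac12\mathbb{E}R_K^2\le P_0^2\quad\text{for all }0\le K\le N.$$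
   Context: $\|x\|_L^2=L\sum_ix_i^2$. For each $k\ge0$, $e_{k+1}$ is a random vector on the Euclidean unit sphere such that, conditionally on previous iterations, $\mathbb{E}[e_{k+1}^ie_{k+1}^j]=0$ for $i\ne j$ and $\mathbb{E}[(e_{k+1}^i)^2]=\frac1n$; $\tilde\delta_{k+1}$ is random with $|\tilde\delta_{k+1}|\le\delta$; $\tilde\nabla f(y)=n(\langle\nabla f(y),e_{k+1}\rangle+\tilde\delta_{k+1})e_{k+1}$. Method: $x_0=u_0=y_0$, $\alpha_0=1-\frac1n$, $A_0=\alpha_0$; for $k\ge0$: $\alpha_{k+1}=\frac{k+2n}{2n^2}$, $A_{k+1}=A_k+\alpha_{k+1}$, $y_{k+1}=\frac{\alpha_{k+1}u_k+A_kx_k}{A_{k+1}}$, $u_{k+1}=\arg\min_{x\in\mathbb{R}^n}\{\frac12\|x-u_k\|_L^2+\alpha_{k+1}\langle\tilde\nabla f(y_{k+1}),x\rangle\}$, $x_{k+1}=y_{k+1}+n\frac{\alpha_{k+1}}{A_{k+1}}(u_{k+1}-u_k)$. *)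

theory Defs
  imports "HOL-Analysis.Analysis" "HOL-Probability.Probability"
begin

fun mtm_alpha :: "nat \<Rightarrow> nat \<Rightarrow> real" where
  "mtm_alpha n 0 = 1 - 1 / real n"
| "mtm_alpha n (Suc k) = (real k + 2 * real n) / (2 * real n ^ 2)"

definition mtm_A :: "nat \<Rightarrow> nat \<Rightarrow> real" where
  "mtm_A n k = (\<Sum>i\<le>k. mtm_alpha n i)"

definition normL_sq :: "real \<Rightarrow> real ^ 'n \<Rightarrow> real" where
  "normL_sq L x = L * (\<Sum>i\<in>UNIV. (x $ i)^2)"

end

(*
  Let Phi_k = A_k (f(x_k) - f_* ) + L/2 |u_k - x_* |^2 and phi_k = E Phi_k, so that phi_0 = P_0^2/2
  and L/2 E|u_k - x_* |^2 <= phi_k.  Write g = grad f(y_{k+1}), w = u_k - x_*, e = e_{k+1} and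
  alpha = alpha_{k+1}.  The descent lemma at y_{k+1}, convexity and the two update rules give
    Phi_{k+1} <= Phi_k + alpha <g, w> - n alpha <g, e><e, w> + O(delta |<g, e>|) + O(delta |<e, w>|)
  pointwise, where n^2 alpha^2 <= A_{k+1} is what makes the remaining quadratic terms nonpositive.
  Since g and w are determined at time k and e is conditionally isotropic,
  E <g, e><e, w> = E <g, w> / n, so the linear terms cancel in expectation.  AM-GM turns the
  delta-terms into the second moments E|g|^2 and E|w|^2, which are bounded by phi_k.  Hence one
  step costs at most P_0^2/(2T), T = sqrt 2 n P_0 / sqrt eps >= N, as long as phi_k <= P_0^2, and
  induction over the at most T steps keeps phi_K <= P_0^2.
*)

theory Submission
  imports Defs
begin

section \<open>Smooth convex functions\<close>

lemma has_real_derivative_along_line: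
  fixes f :: "'a::real_inner \<Rightarrow> real"
  assumes grad: "\<And>z. GDERIV f z :> gradf z"
  shows "((\<lambda>t. f (z + t *\<^sub>R h)) has_real_derivative inner h (gradf (z + t *\<^sub>R h))) (at t)"
proof -
  have "((\<lambda>t. z + t *\<^sub>R h) has_derivative (\<lambda>s. s *\<^sub>R h)) (at t)"
    by (auto intro!: derivative_eq_intros)
  from has_derivative_compose[OF this grad[of "z + t *\<^sub>R h", unfolded gderiv_def]]
  show ?thesis
    by (simp add: o_def has_field_derivative_def mult.commute[of _ "inner h _"])
qed

lemma lipschitz_gradient_upper_bound:
  fixes f :: "'a::real_inner \<Rightarrow> real"
  assumes grad: "\<And>z. GDERIV f z :> gradf z"
    and lip: "\<And>z w. norm (gradf z - gradf w) \<le> L * norm (z - w)"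
  shows "f (z + h) \<le> f z + inner (gradf z) h + L / 2 * norm h ^ 2"
proof -
  define \<psi> where "\<psi> t = f (z + t *\<^sub>R h) - t * inner (gradf z) h - L / 2 * t^2 * norm h ^ 2" for t
  define \<psi>' where "\<psi>' t = inner h (gradf (z + t *\<^sub>R h)) - inner (gradf z) h - L * t * norm h ^ 2" for t
  have "DERIV \<psi> t :> \<psi>' t" for t
    unfolding \<psi>_def \<psi>'_def
    by (rule derivative_eq_intros has_real_derivative_along_line[OF grad] | simp)+
  then obtain \<xi> where \<xi>: "0 < \<xi>" "\<xi> < 1" "\<psi> 1 - \<psi> 0 = \<psi>' \<xi>"
    using MVT2[of 0 1 \<psi> \<psi>'] by auto
  have "inner h (gradf (z + \<xi> *\<^sub>R h)) - inner (gradf z) h = inner (gradf (z + \<xi> *\<^sub>R h) - gradf z) h"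
    by (simp add: inner_diff_left inner_diff_right inner_commute)
  also have "\<dots> \<le> norm (gradf (z + \<xi> *\<^sub>R h) - gradf z) * norm h"
    by (rule norm_cauchy_schwarz)
  also have "\<dots> \<le> (L * norm (\<xi> *\<^sub>R h)) * norm h"
    using lip[of "z + \<xi> *\<^sub>R h" z] by (intro mult_right_mono) auto
  also have "\<dots> = L * \<xi> * norm h ^ 2" using \<xi> by (simp add: power2_eq_square)
  finally have "\<psi>' \<xi> \<le> 0" unfolding \<psi>'_def by simp
  with \<xi> show ?thesis unfolding \<psi>_def by simp
qed

lemma convex_gradient_lower_bound:
  fixes f :: "'a::real_inner \<Rightarrow> real"
  assumes grad: "\<And>z. GDERIV f z :> gradf z"
    and convex: "convex_on UNIV f"
  shows "f z + inner (gradf z) (v - z) \<le> f v"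
proof -
  define g where "g t = f (z + t *\<^sub>R (v - z))" for t
  have "convex_on UNIV g"
  proof (rule convex_onI)
    fix t a b :: real assume t: "0 < t" "t < 1"
    have "z + ((1 - t) *\<^sub>R a + t *\<^sub>R b) *\<^sub>R (v - z)
        = (1 - t) *\<^sub>R (z + a *\<^sub>R (v - z)) + t *\<^sub>R (z + b *\<^sub>R (v - z))"
      by (simp add: algebra_simps)
    then show "g ((1 - t) *\<^sub>R a + t *\<^sub>R b) \<le> (1 - t) * g a + t * g b"
      unfolding g_def using convex_onD[OF convex, of t] t by simp
  qed simp
  moreover have "(g has_real_derivative inner (v - z) (gradf z)) (at 0 within UNIV)"
    unfolding g_def using has_real_derivative_along_line[OF grad, of z "v - z" 0] by simp
  ultimately have "g 1 - g 0 \<ge> inner (v - z) (gradf z) * (1 - 0)"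
    by (metis convex_on_imp_above_tangent UNIV_I connected_UNIV interior_UNIV)
  then show ?thesis unfolding g_def by (simp add: inner_commute)
qed

lemma norm_gradient_sq_le:
  fixes f :: "'a::real_inner \<Rightarrow> real"
  assumes desc: "\<And>z h. f (z + h) \<le> f z + inner (gradf z) h + L / 2 * norm h ^ 2"
    and Lpos: "L > 0" and minimum: "\<And>z. f xs \<le> f z"
  shows "norm (gradf z) ^ 2 \<le> 2 * L * (f z - f xs)"
proof -
  have "f xs \<le> f (z + (- (1 / L)) *\<^sub>R gradf z)" by (rule minimum)
  also have "\<dots> \<le> f z + inner (gradf z) ((- (1 / L)) *\<^sub>R gradf z)
                    + L / 2 * norm ((- (1 / L)) *\<^sub>R gradf z) ^ 2"
    by (rule desc)
  also have "\<dots> = f z - norm (gradf z) ^ 2 / (2 * L)"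
    using Lpos by (simp add: power2_norm_eq_inner[symmetric] power2_eq_square field_simps)
  finally show ?thesis using Lpos by (simp add: field_simps)
qed

section \<open>One step of the triangle method\<close>

lemma norm_diff_scaleR_sq:
  fixes v w :: "'a::real_inner"
  shows "norm (v - c *\<^sub>R w)^2 = norm v ^ 2 - 2 * c * inner v w + c^2 * norm w ^ 2"
proof -
  have "norm (v - c *\<^sub>R w)^2 = inner (v - c *\<^sub>R w) (v - c *\<^sub>R w)" by (rule power2_norm_eq_inner)
  also have "\<dots> = inner v v - 2 * c * inner v w + c^2 * inner w w"
    by (simp add: inner_diff_left inner_diff_right inner_commute power2_eq_square algebra_simps)
  finally show ?thesis by (simp add: power2_norm_eq_inner)
qed

lemma quadratic_argmin_eq:
  fixes u' u g z :: "'a::real_inner"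
  assumes L: "L > 0"
    and min: "1 / 2 * (L * norm (u' - u)^2) + a * inner g u'
      \<le> 1 / 2 * (L * norm (z - u)^2) + a * inner g z"
    and z: "z = u - (a / L) *\<^sub>R g"
  shows "u' = z"
proof -
  have complete_square: "1 / 2 * (L * norm (v - u)^2) + a * inner g v
      = L / 2 * norm (v - z)^2 + (a * inner g z + a^2 / (2 * L) * norm g ^ 2)" for v
  proof -
    have "norm (v - u)^2 = norm ((v - z) - (a / L) *\<^sub>R g)^2" unfolding z by (simp add: algebra_simps)
    also have "\<dots> = norm (v - z)^2 - 2 * (a / L) * inner (v - z) g + (a / L)^2 * norm g ^ 2"
      by (rule norm_diff_scaleR_sq)
    finally have "1 / 2 * (L * norm (v - u)^2)
        = L / 2 * norm (v - z)^2 - a * inner (v - z) g + a^2 / (2 * L) * norm g ^ 2"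
      using L by (simp add: power2_eq_square field_simps)
    then show ?thesis by (simp add: inner_commute algebra_simps)
  qed
  from min have "L / 2 * norm (u' - z)^2 \<le> 0" unfolding complete_square by simp
  with L show ?thesis by (simp add: mult_le_0_iff)
qed

lemma abs_le_half_sq_div_add:
  fixes t \<beta> :: real
  assumes "\<beta> > 0"
  shows "\<bar>t\<bar> \<le> (t^2 / \<beta> + \<beta>) / 2"
proof -
  have "2 * \<bar>t\<bar> * \<beta> \<le> t^2 + \<beta>^2"
    using zero_le_power2[of "\<bar>t\<bar> - \<beta>"] by (simp add: power2_eq_square algebra_simps)
  with assms show ?thesis by (simp add: field_simps power2_eq_square)
qed

lemma noisy_step_quadratic_le:
  fixes D \<beta> s t \<delta> p c :: real
  assumes "D \<ge> 0" "0 \<le> \<beta>" "\<beta> \<le> 1" "\<bar>t\<bar> \<le> \<delta>" "c \<ge> 0"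
  shows "- D * (s + t) * s + D * \<beta> / 2 * (s + t)^2 + D / 2 * (s + t)^2 - c * t * p
     \<le> D * (\<bar>s\<bar> * \<delta> + \<delta>^2) + c * \<delta> * \<bar>p\<bar>"
proof -
  have "s * t \<le> \<bar>s\<bar> * \<bar>t\<bar>" by (simp add: abs_mult[symmetric])
  also have "\<dots> \<le> \<bar>s\<bar> * \<delta>" using assms(4) by (simp add: mult_left_mono)
  finally have "\<beta> * (s * t) \<le> \<beta> * (\<bar>s\<bar> * \<delta>)" using assms(2) by (rule mult_left_mono)
  also have "\<dots> \<le> \<bar>s\<bar> * \<delta>"
    using assms(2-4) by (intro mult_left_le_one_le) auto
  finally have st: "\<beta> * (s * t) \<le> \<bar>s\<bar> * \<delta>" .
  have tt: "(1 + \<beta>) / 2 * t^2 \<le> \<delta>^2"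
  proof -
    have "(1 + \<beta>) / 2 * t^2 \<le> 1 * t^2" using assms(2,3) by (intro mult_right_mono) auto
    also have "\<dots> \<le> \<delta>^2" using assms(4) power_mono[of "\<bar>t\<bar>" \<delta> 2] by simp
    finally show ?thesis .
  qed
  have "- (s + t) * s + \<beta> / 2 * (s + t)^2 + 1 / 2 * (s + t)^2
      = - ((1 - \<beta>) / 2) * s^2 + \<beta> * (s * t) + (1 + \<beta>) / 2 * t^2"
    by (simp add: power2_eq_square field_simps)
  also have "\<dots> \<le> \<bar>s\<bar> * \<delta> + \<delta>^2"
  proof -
    have "0 \<le> (1 - \<beta>) / 2 * s^2" using assms(3) by simp
    then show ?thesis using st tt by linarith
  qed
  finally have "D * (- (s + t) * s + \<beta> / 2 * (s + t)^2 + 1 / 2 * (s + t)^2) \<le> D * (\<bar>s\<bar> * \<delta> + \<delta>^2)"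
    using assms(1) by (rule mult_left_mono)
  moreover have "c * (- t * p) \<le> c * (\<delta> * \<bar>p\<bar>)"
  proof (rule mult_left_mono[OF _ assms(5)])
    have "- t * p \<le> \<bar>t\<bar> * \<bar>p\<bar>" by (simp add: abs_mult[symmetric])
    also have "\<dots> \<le> \<delta> * \<bar>p\<bar>" using assms(4) by (simp add: mult_right_mono)
    finally show "- t * p \<le> \<delta> * \<bar>p\<bar>" .
  qed
  ultimately show ?thesis by (simp add: algebra_simps)
qed

lemma triangle_value_le:
  fixes f :: "'a::real_inner \<Rightarrow> real"
  assumes desc: "\<And>z h. f (z + h) \<le> f z + inner (gradf z) h + L / 2 * norm h ^ 2"
    and tan: "\<And>z v. f z + inner (gradf z) (v - z) \<le> f v"
    and a: "a \<ge> 0" and A': "A' \<ge> 0" and A: "A = A' + a"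
    and y: "A *\<^sub>R y = a *\<^sub>R u + A' *\<^sub>R x"
  shows "A * (f (y - r *\<^sub>R e) - f xs) \<le> A' * (f x - f xs) + a * inner (gradf y) (u - xs)
    - A * r * inner (gradf y) e + A * L / 2 * (r^2 * norm e ^ 2)"
proof -
  have "f (y - r *\<^sub>R e) \<le> f y - r * inner (gradf y) e + L / 2 * (r^2 * norm e ^ 2)"
    using desc[of y "- r *\<^sub>R e"] by (simp add: power_mult_distrib)
  then have "A * f (y - r *\<^sub>R e) \<le> A * (f y - r * inner (gradf y) e + L / 2 * (r^2 * norm e ^ 2))"
    using A A' a by (intro mult_left_mono) auto
  moreover have "A' * (f y + inner (gradf y) (x - y)) \<le> A' * f x"
    using tan[of y x] A' by (rule mult_left_mono)
  moreover have "a * (f y + inner (gradf y) (xs - y)) \<le> a * f xs"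
    using tan[of y xs] a by (rule mult_left_mono)
  moreover have "A' *\<^sub>R (x - y) + a *\<^sub>R (xs - y) = - a *\<^sub>R (u - xs)"
    using y A by (simp add: algebra_simps)
  then have "A' * inner (gradf y) (x - y) + a * inner (gradf y) (xs - y) = - a * inner (gradf y) (u - xs)"
    by (metis inner_add_right inner_scaleR_right)
  ultimately show ?thesis using A by (simp add: algebra_simps)
qed

lemma triangle_step_potential_le:
  fixes f :: "'a::real_inner \<Rightarrow> real"
  assumes desc: "\<And>z h. f (z + h) \<le> f z + inner (gradf z) h + L / 2 * norm h ^ 2"
    and tan: "\<And>z v. f z + inner (gradf z) (v - z) \<le> f v"
    and L: "L > 0" and a: "a > 0" and A': "A' \<ge> 0" and A: "A = A' + a"
    and nA: "n^2 * a^2 \<le> A" and n: "n \<ge> 0" and t: "\<bar>t\<bar> \<le> \<delta>" and e: "norm e = 1"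
    and y: "y = (1 / A) *\<^sub>R (a *\<^sub>R u + A' *\<^sub>R x)"
    and u': "u' = u - (a / L) *\<^sub>R ((n * (inner (gradf y) e + t)) *\<^sub>R e)"
    and x': "x' = y + (n * a / A) *\<^sub>R (u' - u)"
  shows "A * (f x' - f xs) + L / 2 * norm (u' - xs)^2
     \<le> A' * (f x - f xs) + L / 2 * norm (u - xs)^2
        + a * inner (gradf y - (n * inner (gradf y) e) *\<^sub>R e) (u - xs)
        + n^2 * a^2 / L * (\<bar>inner (gradf y) e\<bar> * \<delta> + \<delta>^2)
        + a * n * \<delta> * \<bar>inner e (u - xs)\<bar>"
proof -
  define s where "s = inner (gradf y) e"
  define p where "p = inner e (u - xs)"
  define q where "q = inner (gradf y) (u - xs)"
  define D where "D = n^2 * a^2 / L"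
  define \<beta> where "\<beta> = n^2 * a^2 / A"
  have Apos: "A > 0" using A A' a by simp
  have "x' = y - (D / A * (s + t)) *\<^sub>R e"
    unfolding x' u' s_def D_def by (simp add: power2_eq_square mult_ac)
  moreover have "A * (D / A * (s + t)) * s = D * (s + t) * s"
    and "A * L / 2 * ((D / A * (s + t))^2 * norm e ^ 2) = D * \<beta> / 2 * (s + t)^2"
    using Apos L e unfolding \<beta>_def D_def by (simp_all add: power2_eq_square field_simps)
  ultimately have "A * (f x' - f xs)
      \<le> A' * (f x - f xs) + a * q - D * (s + t) * s + D * \<beta> / 2 * (s + t)^2"
    using triangle_value_le[OF desc tan less_imp_le[OF a] A' A, where r="D / A * (s + t)" and e=e] y Apos
    unfolding q_def s_def by simp
  moreover have "L / 2 * norm (u' - xs)^2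
      = L / 2 * norm (u - xs)^2 - a * n * (s + t) * p + D / 2 * (s + t)^2"
  proof -
    define c where "c = a / L * (n * (s + t))"
    have "norm (u' - xs)^2 = norm ((u - xs) - c *\<^sub>R e)^2"
      unfolding u' s_def c_def by (simp add: algebra_simps)
    also have "\<dots> = norm (u - xs)^2 - 2 * c * p + c^2"
      using e unfolding p_def by (simp add: norm_diff_scaleR_sq inner_commute[of "u - xs"])
    finally have "norm (u' - xs)^2 = norm (u - xs)^2 - 2 * c * p + c^2" .
    moreover have "L / 2 * (X - 2 * c * p + c^2) = L / 2 * X - a * n * (s + t) * p + D / 2 * (s + t)^2"
      for X using L unfolding D_def c_def by (simp add: power2_eq_square field_simps)
    ultimately show ?thesis by simp
  qed
  moreover have "- D * (s + t) * s + D * \<beta> / 2 * (s + t)^2 + D / 2 * (s + t)^2 - (a * n) * t * p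
      \<le> D * (\<bar>s\<bar> * \<delta> + \<delta>^2) + (a * n) * \<delta> * \<bar>p\<bar>"
    using L a n nA Apos t unfolding D_def \<beta>_def by (intro noisy_step_quadratic_le) auto
  moreover have inner_eq: "inner (gradf y - (n * s) *\<^sub>R e) (u - xs) = q - n * s * p"
    unfolding p_def q_def by (simp add: inner_diff_left)
  ultimately show ?thesis
    unfolding s_def[symmetric] p_def[symmetric] D_def[symmetric] inner_eq
    by (simp add: algebra_simps power2_eq_square)
qed

section \<open>Conditionally isotropic directions\<close>

lemma integrable_continuous_bounded:
  fixes X :: "'w \<Rightarrow> 'b::euclidean_space" and h :: "'b \<Rightarrow> real"
  assumes "finite_measure M" and X: "X \<in> borel_measurable M"
    and bound: "\<And>\<omega>. \<omega> \<in> space M \<Longrightarrow> norm (X \<omega>) \<le> B"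
    and h: "continuous_on UNIV h"
  shows "integrable M (\<lambda>\<omega>. h (X \<omega>))"
proof -
  interpret finite_measure M by fact
  have "compact (h ` cball 0 B)"
    by (rule compact_continuous_image[OF continuous_on_subset[OF h] compact_cball]) simp
  then obtain C where "\<And>z. z \<in> h ` cball 0 B \<Longrightarrow> norm z \<le> C"
    using compact_imp_bounded bounded_iff by metis
  with bound have "AE \<omega> in M. norm (h (X \<omega>)) \<le> C"
    by (intro AE_I2) auto
  moreover have "(\<lambda>\<omega>. h (X \<omega>)) \<in> borel_measurable M"
    by (rule borel_measurable_continuous_on[OF h X])
  ultimately show ?thesis by (rule integrable_const_bound)
qed

lemma integral_mult_cond_exp_eq:
  fixes g h :: "'w \<Rightarrow> real"
  assumes sub: "subalgebra M F" and "finite_measure M"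
    and g: "g \<in> borel_measurable F" and h: "h \<in> borel_measurable M"
    and gh: "integrable M (\<lambda>\<omega>. g \<omega> * h \<omega>)"
    and cond: "AE \<omega> in M. real_cond_exp M F h \<omega> = c"
  shows "(\<integral>\<omega>. g \<omega> * h \<omega> \<partial>M) = (\<integral>\<omega>. g \<omega> * c \<partial>M)"
proof -
  interpret finite_measure M by fact
  interpret finite_measure_subalgebra M F by unfold_locales (rule sub)
  have "(\<integral>\<omega>. g \<omega> * h \<omega> \<partial>M) = (\<integral>\<omega>. g \<omega> * real_cond_exp M F h \<omega> \<partial>M)"
    using real_cond_exp_intg(2)[OF gh g h] by simp
  also have "\<dots> = (\<integral>\<omega>. g \<omega> * c \<partial>M)"
  proof (rule integral_cong_AE)
    show "(\<lambda>\<omega>. g \<omega> * real_cond_exp M F h \<omega>) \<in> borel_measurable M" "(\<lambda>\<omega>. g \<omega> * c) \<in> borel_measurable M"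
      using measurable_from_subalg[OF sub g] borel_measurable_cond_exp2 by measurable
    show "AE \<omega> in M. g \<omega> * real_cond_exp M F h \<omega> = g \<omega> * c"
      using cond by (rule AE_mp) simp
  qed
  finally show ?thesis .
qed

lemma integral_inner_mult_inner_cond_isotropic:
  fixes e G W :: "'w \<Rightarrow> real ^ 'n"
  assumes prob: "prob_space M" and sub: "subalgebra M F"
    and e: "e \<in> borel_measurable M" and G: "G \<in> borel_measurable F" and W: "W \<in> borel_measurable F"
    and bound: "\<And>\<omega>. \<omega> \<in> space M \<Longrightarrow> norm (e \<omega>) \<le> 1 \<and> norm (G \<omega>) \<le> B \<and> norm (W \<omega>) \<le> B"
    and cov: "\<And>i j. AE \<omega> in M.
        real_cond_exp M F (\<lambda>\<omega>. e \<omega> $ i * e \<omega> $ j) \<omega> = (if i = j then c else 0)"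
  shows "(\<integral>\<omega>. inner (G \<omega>) (e \<omega>) * inner (e \<omega>) (W \<omega>) \<partial>M) = c * (\<integral>\<omega>. inner (G \<omega>) (W \<omega>) \<partial>M)"
proof -
  interpret prob_space M by (rule prob)
  have GM: "G \<in> borel_measurable M" and WM: "W \<in> borel_measurable M"
    using measurable_from_subalg[OF sub] G W by blast+
  have integrable: "integrable M (\<lambda>\<omega>. h (G \<omega>, W \<omega>, e \<omega>))"
    if "continuous_on UNIV h" for h :: "(real ^ 'n) \<times> (real ^ 'n) \<times> (real ^ 'n) \<Rightarrow> real"
  proof (rule integrable_continuous_bounded[where X="\<lambda>\<omega>. (G \<omega>, W \<omega>, e \<omega>)" and B="B + (B + 1)",
        OF finite_measure_axioms _ _ that])
    show "(\<lambda>\<omega>. (G \<omega>, W \<omega>, e \<omega>)) \<in> borel_measurable M" using GM WM e by measurable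
    show "norm (G \<omega>, W \<omega>, e \<omega>) \<le> B + (B + 1)" if "\<omega> \<in> space M" for \<omega>
      using bound[OF that] norm_Pair_le[of "G \<omega>" "(W \<omega>, e \<omega>)"] norm_Pair_le[of "W \<omega>" "e \<omega>"]
      by linarith
  qed
  have int_fg: "integrable M (\<lambda>\<omega>. G \<omega> $ i * W \<omega> $ j * (e \<omega> $ i * e \<omega> $ j))" for i j
    by (rule integrable[of "\<lambda>p. fst p $ i * fst (snd p) $ j * (snd (snd p) $ i * snd (snd p) $ j)",
          simplified]) (intro continuous_intros)
  have int_f: "integrable M (\<lambda>\<omega>. G \<omega> $ i * W \<omega> $ j)" for i j
    by (rule integrable[of "\<lambda>p. fst p $ i * fst (snd p) $ j", simplified]) (intro continuous_intros)
  have coordinate: "(\<integral>\<omega>. G \<omega> $ i * W \<omega> $ j * (e \<omega> $ i * e \<omega> $ j) \<partial>M)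
      = (if i = j then c * (\<integral>\<omega>. G \<omega> $ i * W \<omega> $ j \<partial>M) else 0)" for i j
  proof -
    have "(\<lambda>\<omega>. G \<omega> $ i * W \<omega> $ j) \<in> borel_measurable F"
      using measurable_compose[OF G borel_measurable_nth] measurable_compose[OF W borel_measurable_nth]
      by measurable
    moreover have "(\<lambda>\<omega>. e \<omega> $ i * e \<omega> $ j) \<in> borel_measurable M"
      using measurable_compose[OF e borel_measurable_nth] by measurable
    ultimately show ?thesis
      using integral_mult_cond_exp_eq[OF sub finite_measure_axioms _ _ int_fg cov]
      by (simp add: mult.commute)
  qed
  have "inner (G \<omega>) (e \<omega>) * inner (e \<omega>) (W \<omega>)
      = (\<Sum>i\<in>UNIV. \<Sum>j\<in>UNIV. G \<omega> $ i * W \<omega> $ j * (e \<omega> $ i * e \<omega> $ j))" for \<omega>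
    by (simp add: inner_vec_def sum_product mult_ac)
  then have "(\<integral>\<omega>. inner (G \<omega>) (e \<omega>) * inner (e \<omega>) (W \<omega>) \<partial>M)
      = (\<Sum>i\<in>UNIV. \<Sum>j\<in>UNIV. (\<integral>\<omega>. G \<omega> $ i * W \<omega> $ j * (e \<omega> $ i * e \<omega> $ j) \<partial>M))"
    by (simp add: int_fg)
  also have "\<dots> = c * (\<integral>\<omega>. inner (G \<omega>) (W \<omega>) \<partial>M)"
    by (simp add: coordinate inner_vec_def sum_distrib_left int_f)
  finally show ?thesis .
qed

section \<open>Step sizes and the error budget\<close>

lemma mtm_A_Suc: "mtm_A n (Suc k) = mtm_A n k + mtm_alpha n (Suc k)"
  by (simp add: mtm_A_def)

lemma mtm_A_0: "mtm_A n 0 = 1 - 1 / real n"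
  by (simp add: mtm_A_def)

lemma mtm_A_nonneg:
  assumes "n \<ge> 1" shows "mtm_A n k \<ge> 0"
  unfolding mtm_A_def
proof (intro sum_nonneg)
  show "mtm_alpha n i \<ge> 0" for i using assms by (cases i) auto
qed

lemma mtm_A_closed_form:
  "n \<ge> 1 \<Longrightarrow>
    4 * real n^2 * mtm_A n k = 4 * real n^2 - 4 * real n + real k * (real k - 1) + 4 * real n * real k"
proof (induction k)
  case 0
  then show ?case by (simp add: mtm_A_def power2_eq_square field_simps)
next
  case (Suc k)
  then have "4 * real n^2 * mtm_A n (Suc k) = 4 * real n^2 * mtm_A n k + 2 * (real k + 2 * real n)"
    by (simp add: mtm_A_Suc power2_eq_square field_simps)
  with Suc show ?case by (simp add: algebra_simps)
qed

lemma mtm_alpha_sq_le_A: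
  assumes "n \<ge> 1"
  shows "real n^2 * mtm_alpha n (Suc k)^2 \<le> mtm_A n (Suc k)"
proof -
  have n: "real n \<ge> 1" using assms by simp
  have "4 * real n^2 * (real n^2 * mtm_alpha n (Suc k)^2) = (real k + 2 * real n)^2"
    using n by (simp add: power2_eq_square field_simps)
  also have "\<dots> \<le> 4 * real n^2 * mtm_A n (Suc k)"
    unfolding mtm_A_closed_form[OF assms] using n by (simp add: power2_eq_square algebra_simps)
  finally have "4 * real n^2 * (real n^2 * mtm_alpha n (Suc k)^2) \<le> 4 * real n^2 * mtm_A n (Suc k)" .
  moreover have "4 * real n^2 > 0" using n by simp
  ultimately show ?thesis by (simp only: mult_le_cancel_left_pos)
qed

lemma horizon_ge_dim:
  assumes "1 \<le> \<lceil>T + 1 - 2 * real n\<rceil>" and "n \<ge> 1"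
  shows "T \<ge> real n"
  using assms by linarith

lemma iteration_le_horizon:
  assumes "int K \<le> \<lceil>T + 1 - 2 * real n\<rceil>" and "n \<ge> 1"
  shows "real K \<le> T"
  using assms by linarith

lemma alpha_le_horizon:
  assumes "int (Suc k) \<le> \<lceil>T + 1 - 2 * real n\<rceil>" and "T \<ge> real n" and "n \<ge> 1"
  shows "mtm_alpha n (Suc k) \<le> T / real n^2"
proof -
  have "real k + 2 * real n \<le> 2 * T" using assms by linarith
  then have "(real k + 2 * real n) / (2 * real n^2) \<le> 2 * T / (2 * real n^2)"
    by (rule divide_right_mono) simp
  then show ?thesis by (simp add: mtm_alpha.simps)
qed

\<comment> \<open>Bound on \<open>\<phi>\<^sub>k\<^sub>+\<^sub>1 - \<phi>\<^sub>k\<close> for step weight \<open>a = \<alpha>\<^sub>k\<^sub>+\<^sub>1\<close> while \<open>\<phi>\<^sub>k \<le> P\<^sup>2\<close>, cf. \<open>expected_potential_Suc_le\<close>.\<close>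
definition mtm_step_error :: "nat \<Rightarrow> real \<Rightarrow> real \<Rightarrow> real \<Rightarrow> real \<Rightarrow> real" where
  "mtm_step_error n L \<delta> P a =
     a * \<delta> * P * sqrt (2 * real n / L) * (2 + sqrt a) + real n^2 * a^2 * \<delta>^2 / L"

lemma delta_le_scaled:
  assumes \<epsilon>: "\<epsilon> > 0" and P: "P > 0" and n: "n \<ge> 1"
    and \<delta>: "\<delta> \<le> \<epsilon> powr (3/2) * sqrt L / (96 * sqrt (real n) * P^2)"
  shows "(sqrt 2 * real n * P / sqrt \<epsilon> / real n)^3 * \<delta> \<le> sqrt 2 * P * sqrt L / (48 * sqrt (real n))"
proof -
  have "\<epsilon> powr (3/2) = sqrt \<epsilon> ^ 3"
    using \<epsilon> by (simp add: powr_half_sqrt[symmetric] powr_realpow[symmetric] powr_powr)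
  moreover have "sqrt 2 ^ 3 = 2 * sqrt 2" by (simp add: power3_eq_cube)
  ultimately have "(sqrt 2 * real n * P / sqrt \<epsilon> / real n)^3
      * (\<epsilon> powr (3/2) * sqrt L / (96 * sqrt (real n) * P^2))
      = sqrt 2 * P * sqrt L / (48 * sqrt (real n))"
    using \<epsilon> P n by (simp add: power3_eq_cube power2_eq_square field_simps)
  moreover have "(sqrt 2 * real n * P / sqrt \<epsilon> / real n)^3 \<ge> 0" using \<epsilon> P by simp
  ultimately show ?thesis using \<delta> by (metis mult_left_mono)
qed

text \<open>With \<open>Z = T / n \<ge> 1\<close> one has \<open>T a \<le> Z\<^sup>2\<close>, \<open>n a \<le> Z\<close> and \<open>2 + \<surd>a \<le> 3 Z\<close>,
  so both terms of the step error are controlled by \<open>Z\<^sup>3 \<delta>\<close>.\<close>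

lemma mtm_step_error_le_cube:
  assumes n: "n \<ge> 1" and L: "L > 0" and P: "P \<ge> 0" and \<delta>: "\<delta> \<ge> 0" and a: "a \<ge> 0"
    and T: "T \<ge> real n" "a \<le> T / real n^2"
  shows "T * mtm_step_error n L \<delta> P a
    \<le> 3 * ((T / real n)^3 * \<delta>) * P * sqrt (2 * real n / L) + real n * ((T / real n)^3 * \<delta>)^2 / L"
proof -
  define Z where "Z = T / real n"
  define c where "c = sqrt (2 * real n / L)"
  have Z: "Z \<ge> 1" unfolding Z_def using T n by simp
  have na: "real n * a \<le> Z" unfolding Z_def using T(2) n by (simp add: power2_eq_square field_simps)
  have Ta: "T * a \<le> Z^2"
    using mult_left_mono[OF na, of Z] Z unfolding Z_def using n by (simp add: power2_eq_square)
  have "a \<le> real n * a" using n a mult_right_mono[of 1 "real n" a] by simp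
  also have "\<dots> \<le> Z * Z" using na Z by (simp add: mult_le_cancel_left1 order_trans[OF na])
  finally have "sqrt a \<le> sqrt (Z^2)" unfolding power2_eq_square by (rule real_sqrt_le_mono)
  with Z have sa: "2 + sqrt a \<le> 3 * Z" by simp
  have c: "c \<ge> 0" unfolding c_def using L by simp
  have "T * (a * \<delta> * P * c * (2 + sqrt a)) = (T * a) * (\<delta> * P * c * (2 + sqrt a))"
    by (simp add: mult_ac)
  also have "\<dots> \<le> Z^2 * (\<delta> * P * c * (3 * Z))"
    using Ta sa \<delta> P c a by (intro mult_mono mult_left_mono) auto
  also have "\<dots> = 3 * (Z^3 * \<delta>) * P * c" by (simp add: power3_eq_cube power2_eq_square)
  finally have first: "T * (a * \<delta> * P * c * (2 + sqrt a)) \<le> 3 * (Z^3 * \<delta>) * P * c" .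
  have "T * (real n^2 * a^2 * \<delta>^2 / L) = (T * a) * (real n * a) * (real n * \<delta>^2 / L)"
    by (simp add: power2_eq_square)
  also have "\<dots> \<le> Z^2 * Z * (real n * \<delta>^2 / L)"
    using Ta na Z L a by (intro mult_mono) auto
  also have "\<dots> = real n * (Z^3 * \<delta>^2) / L" by (simp add: power3_eq_cube power2_eq_square)
  also have "\<dots> \<le> real n * ((Z^3)^2 * \<delta>^2) / L"
  proof -
    have "Z^3 \<le> (Z^3)^2" using Z by (simp add: power_increasing)
    then show ?thesis using L by (intro divide_right_mono mult_left_mono mult_right_mono) auto
  qed
  finally have second: "T * (real n^2 * a^2 * \<delta>^2 / L) \<le> real n * (Z^3 * \<delta>)^2 / L"
    by (simp add: power_mult_distrib)
  have "T * mtm_step_error n L \<delta> P a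
      = T * (a * \<delta> * P * c * (2 + sqrt a)) + T * (real n^2 * a^2 * \<delta>^2 / L)"
    unfolding mtm_step_error_def c_def by (simp add: distrib_left)
  with first second show ?thesis unfolding Z_def c_def by linarith
qed

lemma mtm_step_error_budget:
  assumes n: "n \<ge> 1" and L: "L > 0" and P: "P > 0" and \<delta>: "\<delta> \<ge> 0" and a: "a \<ge> 0"
    and T: "T \<ge> real n" "a \<le> T / real n^2"
    and \<delta>_le: "(T / real n)^3 * \<delta> \<le> sqrt 2 * P * sqrt L / (48 * sqrt (real n))"
  shows "T * mtm_step_error n L \<delta> P a \<le> P^2 / 2"
proof -
  define W where "W = (T / real n)^3 * \<delta>"
  define c where "c = sqrt (2 * real n / L)"
  have W0: "W \<ge> 0" unfolding W_def using T n \<delta> by simp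
  have "W * P * c \<le> sqrt 2 * P * sqrt L / (48 * sqrt (real n)) * P * c"
    using \<delta>_le P L unfolding W_def c_def by (intro mult_right_mono) auto
  also have "\<dots> = P^2 / 24"
    using n L unfolding c_def by (simp add: real_sqrt_divide real_sqrt_mult power2_eq_square)
  finally have first: "W * P * c \<le> P^2 / 24" .
  have "W^2 \<le> (sqrt 2 * P * sqrt L / (48 * sqrt (real n)))^2"
    using \<delta>_le W0 unfolding W_def by (intro power_mono) auto
  then have "real n * W^2 / L \<le> real n * (sqrt 2 * P * sqrt L / (48 * sqrt (real n)))^2 / L"
    using n L by (intro divide_right_mono mult_left_mono) auto
  also have "\<dots> = P^2 / 1152" using n L by (simp add: power_divide power_mult_distrib)
  finally have second: "real n * W^2 / L \<le> P^2 / 1152" .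
  from mtm_step_error_le_cube[OF n L less_imp_le[OF P] \<delta> a T] first second zero_le_power2[of P]
  show ?thesis unfolding W_def[symmetric] c_def[symmetric] by linarith
qed

lemma bootstrap_bound:
  fixes \<phi> :: "nat \<Rightarrow> real"
  assumes "\<phi> 0 \<le> B / 2" and "E \<ge> 0" and "real K * E \<le> B / 2"
    and step: "\<And>k. k < K \<Longrightarrow> \<phi> k \<le> B \<Longrightarrow> \<phi> (Suc k) \<le> \<phi> k + E"
  shows "\<phi> K \<le> B"
proof -
  have "\<phi> k \<le> B / 2 + real k * E" if "k \<le> K" for k
    using that
  proof (induction k)
    case (Suc k)
    moreover have "real k * E \<le> B / 2"
      using Suc.prems assms(2,3) by (meson order_trans mult_right_mono of_nat_le_iff Suc_leD)
    ultimately have "\<phi> (Suc k) \<le> \<phi> k + E" by (intro step) auto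
    with Suc show ?case by (simp add: algebra_simps)
  qed (use assms(1) in simp)
  from this[of K] assms(3) show ?thesis by simp
qed

section \<open>The method in expectation\<close>

lemma normL_sq_eq: "normL_sq L (v :: real ^ 'n) = L * norm v ^ 2"
  unfolding normL_sq_def power2_norm_eq_inner inner_vec_def by (simp add: power2_eq_square)

\<comment> \<open>From here on \<open>mtm_alpha n (Suc k)\<close> is kept folded; only its positivity and bounds are used.\<close>
declare mtm_alpha.simps(2) [simp del]

locale inexact_mtm =
  fixes n :: nat
    and f :: "real ^ 'n \<Rightarrow> real"
    and gradf :: "real ^ 'n \<Rightarrow> real ^ 'n"
    and L \<delta> :: real
    and xs x0 :: "real ^ 'n"
    and M :: "'w measure"
    and F :: "nat \<Rightarrow> 'w measure"
    and e :: "nat \<Rightarrow> 'w \<Rightarrow> real ^ 'n"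
    and dt :: "nat \<Rightarrow> 'w \<Rightarrow> real"
    and x y u :: "nat \<Rightarrow> 'w \<Rightarrow> real ^ 'n"
  assumes dim: "n = CARD('n)"
    and convex: "convex_on UNIV f"
    and grad: "\<And>z. GDERIV f z :> gradf z"
    and Lpos: "L > 0"
    and lipschitz: "\<And>z w. norm (gradf z - gradf w) \<le> L * norm (z - w)"
    and minimum: "\<And>z. f xs \<le> f z"
    and prob: "prob_space M"
    and subalg: "\<And>k. subalgebra M (F k)"
    and filt_mono: "\<And>k. sets (F k) \<subseteq> sets (F (Suc k))"
    and e_meas: "\<And>k. e (Suc k) \<in> borel_measurable (F (Suc k))"
    and dt_meas: "\<And>k. dt (Suc k) \<in> borel_measurable (F (Suc k))"
    and e_sphere: "\<And>k \<omega>. \<omega> \<in> space M \<Longrightarrow> norm (e (Suc k) \<omega>) = 1"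
    and e_cov: "\<And>k i j. AE \<omega> in M.
        real_cond_exp M (F k) (\<lambda>\<omega>. e (Suc k) \<omega> $ i * e (Suc k) \<omega> $ j) \<omega>
          = (if i = j then 1 / real n else 0)"
    and dt_bound: "\<And>k \<omega>. \<omega> \<in> space M \<Longrightarrow> \<bar>dt (Suc k) \<omega>\<bar> \<le> \<delta>"
    and init: "\<And>\<omega>. \<omega> \<in> space M \<Longrightarrow> x 0 \<omega> = x0 \<and> u 0 \<omega> = x0 \<and> y 0 \<omega> = x0"
    and y_step: "\<And>k \<omega>. \<omega> \<in> space M \<Longrightarrow>
        y (Suc k) \<omega> = (1 / mtm_A n (Suc k)) *\<^sub>R
          (mtm_alpha n (Suc k) *\<^sub>R u k \<omega> + mtm_A n k *\<^sub>R x k \<omega>)"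
    and u_step: "\<And>k \<omega> z. \<omega> \<in> space M \<Longrightarrow>
        (1/2) * normL_sq L (u (Suc k) \<omega> - u k \<omega>)
          + mtm_alpha n (Suc k) * inner
              ((real n * (inner (gradf (y (Suc k) \<omega>)) (e (Suc k) \<omega>) + dt (Suc k) \<omega>))
                 *\<^sub>R e (Suc k) \<omega>) (u (Suc k) \<omega>)
        \<le> (1/2) * normL_sq L (z - u k \<omega>)
          + mtm_alpha n (Suc k) * inner
              ((real n * (inner (gradf (y (Suc k) \<omega>)) (e (Suc k) \<omega>) + dt (Suc k) \<omega>))
                 *\<^sub>R e (Suc k) \<omega>) z"
    and x_step: "\<And>k \<omega>. \<omega> \<in> space M \<Longrightarrow>
        x (Suc k) \<omega> = y (Suc k) \<omega>
          + (real n * mtm_alpha n (Suc k) / mtm_A n (Suc k)) *\<^sub>R (u (Suc k) \<omega> - u k \<omega>)"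
begin

interpretation prob_space M by (rule prob)

lemma n_ge_1: "n \<ge> 1"
  using dim zero_less_card_finite[where 'a='n] by linarith

lemma delta_nonneg: "\<delta> \<ge> 0"
  using dt_bound[of _ 0] not_empty by (meson abs_ge_zero ex_in_conv order_trans)

lemma alpha_pos: "mtm_alpha n (Suc k) > 0"
  using n_ge_1 by (simp add: mtm_alpha.simps)

lemma A_Suc_pos: "mtm_A n (Suc k) > 0"
  using mtm_A_nonneg[OF n_ge_1, of k] alpha_pos[of k] by (simp add: mtm_A_Suc)

lemma descent: "f (z + h) \<le> f z + inner (gradf z) h + L / 2 * norm h ^ 2"
  by (rule lipschitz_gradient_upper_bound[OF grad lipschitz])

lemma tangent: "f z + inner (gradf z) (v - z) \<le> f v"
  by (rule convex_gradient_lower_bound[OF grad convex])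

lemma norm_gradf_sq_le: "norm (gradf z) ^ 2 \<le> 2 * L * (f z - f xs)"
  by (rule norm_gradient_sq_le[OF descent Lpos minimum])

lemma suboptimality_le: "f z - f xs \<le> L / 2 * norm (z - xs)^2"
proof -
  have "gradf xs = 0" using norm_gradf_sq_le[of xs] by simp
  then show ?thesis using descent[of xs "z - xs"] by simp
qed

lemma norm_gradf_le: "norm (gradf z) \<le> norm (gradf 0) + L * norm z"
  using lipschitz[of z 0] norm_triangle_ineq2[of "gradf z" "gradf 0"] by simp

lemma continuous_on_gradf: "continuous_on UNIV gradf"
  by (rule lipschitz_on_continuous_on[of L], rule lipschitz_onI)
    (use lipschitz Lpos in \<open>auto simp: dist_norm\<close>)

lemma continuous_on_f: "continuous_on UNIV f"
  using grad unfolding gderiv_def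
  by (intro continuous_at_imp_continuous_on ballI has_derivative_continuous) blast

lemma space_F: "space (F k) = space M"
  using subalg unfolding subalgebra_def by simp

lemma measurable_F_M: "X \<in> borel_measurable (F k) \<Longrightarrow> X \<in> borel_measurable M"
  by (rule measurable_from_subalg[OF subalg])

lemma measurable_F_Suc: "X \<in> borel_measurable (F k) \<Longrightarrow> X \<in> borel_measurable (F (Suc k))"
  by (rule measurable_from_subalg) (use filt_mono space_F in \<open>auto simp: subalgebra_def\<close>)

lemma measurable_F_cong:
  "(\<And>\<omega>. \<omega> \<in> space M \<Longrightarrow> X \<omega> = Y \<omega>) \<Longrightarrow> Y \<in> borel_measurable (F k) \<Longrightarrow> X \<in> borel_measurable (F k)"
  by (subst measurable_cong[where g=Y]) (auto simp: space_F)

definition grad_estimate :: "nat \<Rightarrow> 'w \<Rightarrow> real ^ 'n" where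
  "grad_estimate k \<omega> =
     (real n * (inner (gradf (y (Suc k) \<omega>)) (e (Suc k) \<omega>) + dt (Suc k) \<omega>)) *\<^sub>R e (Suc k) \<omega>"

lemma u_Suc:
  assumes "\<omega> \<in> space M"
  shows "u (Suc k) \<omega> = u k \<omega> - (mtm_alpha n (Suc k) / L) *\<^sub>R grad_estimate k \<omega>"
  using u_step[OF assms, of k "u k \<omega> - (mtm_alpha n (Suc k) / L) *\<^sub>R grad_estimate k \<omega>"]
  by (intro quadratic_argmin_eq[OF Lpos _ refl]) (simp add: normL_sq_eq grad_estimate_def)

lemma y_Suc_measurable:
  assumes "u k \<in> borel_measurable (F k)" "x k \<in> borel_measurable (F k)"
  shows "y (Suc k) \<in> borel_measurable (F k)"
proof (rule measurable_F_cong[OF y_step])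
  show "(\<lambda>\<omega>. (1 / mtm_A n (Suc k)) *\<^sub>R (mtm_alpha n (Suc k) *\<^sub>R u k \<omega> + mtm_A n k *\<^sub>R x k \<omega>))
      \<in> borel_measurable (F k)"
    using assms by measurable
qed

lemma norm_y_Suc_le:
  assumes bound: "\<And>\<omega>. \<omega> \<in> space M \<Longrightarrow> norm (u k \<omega>) \<le> B \<and> norm (x k \<omega>) \<le> B"
    and \<omega>: "\<omega> \<in> space M"
  shows "norm (y (Suc k) \<omega>) \<le> B"
proof -
  let ?a = "mtm_alpha n (Suc k)" and ?A' = "mtm_A n k" and ?A = "mtm_A n (Suc k)"
  have pos: "?a > 0" "?A' \<ge> 0" "?A > 0"
    using alpha_pos mtm_A_nonneg[OF n_ge_1] A_Suc_pos by auto
  have "norm (y (Suc k) \<omega>) \<le> (1 / ?A) * (?a * norm (u k \<omega>) + ?A' * norm (x k \<omega>))"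
    unfolding y_step[OF \<omega>] using pos by (simp add: norm_triangle_le divide_right_mono)
  also have "\<dots> \<le> (1 / ?A) * (?a * B + ?A' * B)"
    using bound[OF \<omega>] pos by (intro mult_left_mono add_mono) auto
  also have "\<dots> = B" using pos by (simp add: mtm_A_Suc field_simps)
  finally show ?thesis .
qed

lemma norm_grad_estimate_le:
  assumes "\<omega> \<in> space M"
  shows "norm (grad_estimate k \<omega>) \<le> real n * (norm (gradf (y (Suc k) \<omega>)) + \<delta>)"
proof -
  have "\<bar>inner (gradf (y (Suc k) \<omega>)) (e (Suc k) \<omega>)\<bar> \<le> norm (gradf (y (Suc k) \<omega>))"
    using Cauchy_Schwarz_ineq2[of "gradf (y (Suc k) \<omega>)" "e (Suc k) \<omega>"] e_sphere[OF assms] by simp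
  then show ?thesis
    unfolding grad_estimate_def using e_sphere[OF assms] dt_bound[OF assms, of k]
    by (simp add: abs_mult mult_left_mono order_trans[OF abs_triangle_ineq])
qed

lemma norm_gradf_y_Suc_le:
  assumes "\<And>\<omega>. \<omega> \<in> space M \<Longrightarrow> norm (u k \<omega>) \<le> B \<and> norm (x k \<omega>) \<le> B"
    and "\<omega> \<in> space M"
  shows "norm (gradf (y (Suc k) \<omega>)) \<le> norm (gradf 0) + L * B"
  using norm_gradf_le norm_y_Suc_le[OF assms] Lpos
  by (meson add_left_mono mult_left_mono less_imp_le order_trans)

lemma iterates_Suc_measurable:
  assumes u: "u k \<in> borel_measurable (F k)" and x: "x k \<in> borel_measurable (F k)"
  shows "u (Suc k) \<in> borel_measurable (F (Suc k))" and "x (Suc k) \<in> borel_measurable (F (Suc k))"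
proof -
  let ?a = "mtm_alpha n (Suc k)" and ?A = "mtm_A n (Suc k)"
  have y: "y (Suc k) \<in> borel_measurable (F (Suc k))"
    by (rule measurable_F_Suc[OF y_Suc_measurable[OF u x]])
  have "grad_estimate k \<in> borel_measurable (F (Suc k))"
    unfolding grad_estimate_def
    using y e_meas[of k] dt_meas[of k] borel_measurable_continuous_onI[OF continuous_on_gradf]
    by measurable
  then have "(\<lambda>\<omega>. u k \<omega> - (?a / L) *\<^sub>R grad_estimate k \<omega>) \<in> borel_measurable (F (Suc k))"
    using measurable_F_Suc[OF u] by measurable
  with u_Suc show u': "u (Suc k) \<in> borel_measurable (F (Suc k))"
    by (rule measurable_F_cong)
  have "(\<lambda>\<omega>. y (Suc k) \<omega> + (real n * ?a / ?A) *\<^sub>R (u (Suc k) \<omega> - u k \<omega>)) \<in> borel_measurable (F (Suc k))"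
    using measurable_F_Suc[OF u] y u' by measurable
  with x_step show "x (Suc k) \<in> borel_measurable (F (Suc k))"
    by (rule measurable_F_cong)
qed

lemma iterates_Suc_bounded:
  assumes B: "\<And>\<omega>. \<omega> \<in> space M \<Longrightarrow> norm (u k \<omega>) \<le> B \<and> norm (x k \<omega>) \<le> B"
  obtains B' where "\<And>\<omega>. \<omega> \<in> space M \<Longrightarrow> norm (u (Suc k) \<omega>) \<le> B' \<and> norm (x (Suc k) \<omega>) \<le> B'"
proof -
  let ?a = "mtm_alpha n (Suc k)" and ?c = "real n * mtm_alpha n (Suc k) / mtm_A n (Suc k)"
  define Bu where "Bu = B + ?a / L * (real n * (norm (gradf 0) + L * B + \<delta>))"
  have a: "?a / L \<ge> 0" and c: "?c \<ge> 0" using alpha_pos[of k] A_Suc_pos[of k] Lpos by simp_all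
  have bu: "norm (u (Suc k) \<omega>) \<le> Bu" if \<omega>: "\<omega> \<in> space M" for \<omega>
  proof -
    have "norm (grad_estimate k \<omega>) \<le> real n * (norm (gradf 0) + L * B + \<delta>)"
      using norm_grad_estimate_le[OF \<omega>, of k] norm_gradf_y_Suc_le[OF B \<omega>]
      by (meson add_right_mono mult_left_mono of_nat_0_le_iff order_trans)
    then have "?a / L * norm (grad_estimate k \<omega>) \<le> ?a / L * (real n * (norm (gradf 0) + L * B + \<delta>))"
      by (rule mult_left_mono[OF _ a])
    moreover have "norm (u (Suc k) \<omega>) \<le> norm (u k \<omega>) + norm ((?a / L) *\<^sub>R grad_estimate k \<omega>)"
      unfolding u_Suc[OF \<omega>] by (rule norm_triangle_ineq4)
    moreover have "norm ((?a / L) *\<^sub>R grad_estimate k \<omega>) = ?a / L * norm (grad_estimate k \<omega>)"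
      by (simp only: norm_scaleR abs_of_nonneg[OF a])
    ultimately show ?thesis unfolding Bu_def using B[OF \<omega>] by linarith
  qed
  have "norm (x (Suc k) \<omega>) \<le> B + ?c * (Bu + B)" if \<omega>: "\<omega> \<in> space M" for \<omega>
  proof -
    have "norm (u (Suc k) \<omega> - u k \<omega>) \<le> Bu + B"
      using bu[OF \<omega>] B[OF \<omega>] norm_triangle_ineq4[of "u (Suc k) \<omega>" "u k \<omega>"] by linarith
    then have "norm (y (Suc k) \<omega>) + ?c * norm (u (Suc k) \<omega> - u k \<omega>) \<le> B + ?c * (Bu + B)"
      using norm_y_Suc_le[OF B \<omega>] c by (intro add_mono mult_left_mono) auto
    moreover have "norm (?c *\<^sub>R (u (Suc k) \<omega> - u k \<omega>)) = ?c * norm (u (Suc k) \<omega> - u k \<omega>)"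
      by (simp only: norm_scaleR abs_of_nonneg[OF c])
    ultimately show ?thesis
      unfolding x_step[OF \<omega>]
      using norm_triangle_ineq[of "y (Suc k) \<omega>" "?c *\<^sub>R (u (Suc k) \<omega> - u k \<omega>)"] by linarith
  qed
  with bu show ?thesis by (intro that[of "max Bu (B + ?c * (Bu + B))"]) (auto simp: le_max_iff_disj)
qed

\<comment> \<open>Bounded iterates are what make all the expectations below finite.\<close>
lemma iterates_measurable_bounded:
  "u k \<in> borel_measurable (F k) \<and> x k \<in> borel_measurable (F k) \<and>
     (\<exists>B. \<forall>\<omega>\<in>space M. norm (u k \<omega>) \<le> B \<and> norm (x k \<omega>) \<le> B)"
proof (induction k)
  case 0
  have "u 0 \<in> borel_measurable (F 0)" "x 0 \<in> borel_measurable (F 0)"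
    by (rule measurable_F_cong[where Y="\<lambda>_. x0"]; use init in simp)+
  then show ?case using init by auto
next
  case (Suc k)
  then obtain B where u: "u k \<in> borel_measurable (F k)" and x: "x k \<in> borel_measurable (F k)"
    and B: "\<And>\<omega>. \<omega> \<in> space M \<Longrightarrow> norm (u k \<omega>) \<le> B \<and> norm (x k \<omega>) \<le> B" by blast
  obtain B' where "\<And>\<omega>. \<omega> \<in> space M \<Longrightarrow> norm (u (Suc k) \<omega>) \<le> B' \<and> norm (x (Suc k) \<omega>) \<le> B'"
    using iterates_Suc_bounded[OF B] by blast
  with iterates_Suc_measurable[OF u x] show ?case by blast
qed

lemma u_measurable: "u k \<in> borel_measurable (F k)"
  and x_measurable: "x k \<in> borel_measurable (F k)"
  using iterates_measurable_bounded by blast+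

lemma bounded_iterates:
  obtains B where "\<And>\<omega>. \<omega> \<in> space M \<Longrightarrow> norm (u k \<omega>) \<le> B \<and> norm (x k \<omega>) \<le> B"
  using iterates_measurable_bounded by blast

lemma gradf_y_Suc_measurable: "(\<lambda>\<omega>. gradf (y (Suc k) \<omega>)) \<in> borel_measurable (F k)"
  using measurable_compose[OF y_Suc_measurable[OF u_measurable x_measurable]
      borel_measurable_continuous_onI[OF continuous_on_gradf]] .

lemma step_variables_bounded:
  obtains B where "\<And>\<omega>. \<omega> \<in> space M \<Longrightarrow> norm (gradf (y (Suc k) \<omega>)) \<le> B \<and> norm (u k \<omega> - xs) \<le> B"
proof -
  obtain B where B: "\<And>\<omega>. \<omega> \<in> space M \<Longrightarrow> norm (u k \<omega>) \<le> B \<and> norm (x k \<omega>) \<le> B"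
    using bounded_iterates by blast
  have "norm (gradf (y (Suc k) \<omega>)) \<le> norm (gradf 0) + L * B" if "\<omega> \<in> space M" for \<omega>
    by (rule norm_gradf_y_Suc_le[OF B that])
  moreover have "norm (u k \<omega> - xs) \<le> B + norm xs" if "\<omega> \<in> space M" for \<omega>
    using B[OF that] norm_triangle_ineq4[of "u k \<omega>" xs] by simp
  ultimately show ?thesis
    by (intro that[of "max (norm (gradf 0) + L * B) (B + norm xs)"]) (auto simp: le_max_iff_disj)
qed

lemma integrable_step_variables:
  fixes h :: "(real ^ 'n) \<times> (real ^ 'n) \<times> (real ^ 'n) \<Rightarrow> real"
  assumes "continuous_on UNIV h"
  shows "integrable M (\<lambda>\<omega>. h (gradf (y (Suc k) \<omega>), e (Suc k) \<omega>, u k \<omega> - xs))"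
proof -
  obtain B where B: "\<And>\<omega>. \<omega> \<in> space M \<Longrightarrow> norm (gradf (y (Suc k) \<omega>)) \<le> B \<and> norm (u k \<omega> - xs) \<le> B"
    using step_variables_bounded by blast
  show ?thesis
  proof (rule integrable_continuous_bounded[where B="B + (1 + B)", OF finite_measure_axioms _ _ assms])
    show "(\<lambda>\<omega>. (gradf (y (Suc k) \<omega>), e (Suc k) \<omega>, u k \<omega> - xs)) \<in> borel_measurable M"
      using measurable_F_M[OF gradf_y_Suc_measurable] measurable_F_M[OF e_meas]
        measurable_F_M[OF u_measurable] by measurable
    show "norm (gradf (y (Suc k) \<omega>), e (Suc k) \<omega>, u k \<omega> - xs) \<le> B + (1 + B)" if "\<omega> \<in> space M" for \<omega>
      using B[OF that] e_sphere[OF that, of k]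
        norm_Pair_le[of "gradf (y (Suc k) \<omega>)" "(e (Suc k) \<omega>, u k \<omega> - xs)"]
        norm_Pair_le[of "e (Suc k) \<omega>" "u k \<omega> - xs"] by linarith
  qed
qed

lemma integrable_norm_gradf_y_Suc_sq: "integrable M (\<lambda>\<omega>. norm (gradf (y (Suc k) \<omega>))^2)"
  by (rule integrable_step_variables[of "\<lambda>p. norm (fst p)^2", simplified]) (intro continuous_intros)

lemma integrable_dist_sq: "integrable M (\<lambda>\<omega>. norm (u k \<omega> - xs)^2)"
  by (rule integrable_step_variables[of "\<lambda>p. norm (snd (snd p))^2", simplified]) (intro continuous_intros)

lemma integral_inner_e_Suc_isotropic:
  assumes V: "V \<in> borel_measurable (F k)" and W: "W \<in> borel_measurable (F k)"
    and "\<And>\<omega>. \<omega> \<in> space M \<Longrightarrow> norm (V \<omega>) \<le> B" "\<And>\<omega>. \<omega> \<in> space M \<Longrightarrow> norm (W \<omega>) \<le> B"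
  shows "(\<integral>\<omega>. inner (V \<omega>) (e (Suc k) \<omega>) * inner (e (Suc k) \<omega>) (W \<omega>) \<partial>M)
    = 1 / real n * (\<integral>\<omega>. inner (V \<omega>) (W \<omega>) \<partial>M)"
  using assms(3,4) e_sphere
  by (intro integral_inner_mult_inner_cond_isotropic[OF prob subalg measurable_F_M[OF e_meas] V W _ e_cov])
    auto

definition potential :: "nat \<Rightarrow> 'w \<Rightarrow> real" where
  "potential k \<omega> = mtm_A n k * (f (x k \<omega>) - f xs) + L / 2 * norm (u k \<omega> - xs)^2"

definition expected_potential :: "nat \<Rightarrow> real" where
  "expected_potential k = (\<integral>\<omega>. potential k \<omega> \<partial>M)"

lemma integrable_potential: "integrable M (potential k)"
proof -
  obtain B where B: "\<And>\<omega>. \<omega> \<in> space M \<Longrightarrow> norm (u k \<omega>) \<le> B \<and> norm (x k \<omega>) \<le> B"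
    using bounded_iterates by blast
  have "integrable M (\<lambda>\<omega>. (\<lambda>p. mtm_A n k * (f (snd p) - f xs) + L / 2 * norm (fst p - xs)^2)
      (u k \<omega>, x k \<omega>))"
  proof (rule integrable_continuous_bounded[where B="B + B" and X="\<lambda>\<omega>. (u k \<omega>, x k \<omega>)"
        and h="\<lambda>p. mtm_A n k * (f (snd p) - f xs) + L / 2 * norm (fst p - xs)^2",
        OF finite_measure_axioms])
    show "(\<lambda>\<omega>. (u k \<omega>, x k \<omega>)) \<in> borel_measurable M"
      using measurable_F_M[OF u_measurable] measurable_F_M[OF x_measurable] by measurable
    show "norm (u k \<omega>, x k \<omega>) \<le> B + B" if "\<omega> \<in> space M" for \<omega>
      using B[OF that] norm_Pair_le[of "u k \<omega>" "x k \<omega>"] by simp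
    show "continuous_on UNIV (\<lambda>p. mtm_A n k * (f (snd p) - f xs) + L / 2 * norm (fst p - xs)^2)"
      by (intro continuous_intros continuous_on_compose2[OF continuous_on_f]) auto
  qed
  then show ?thesis by (simp add: potential_def[abs_def])
qed

lemma dist_sq_le_potential: "L / 2 * norm (u k \<omega> - xs)^2 \<le> potential k \<omega>"
  unfolding potential_def using mtm_A_nonneg[OF n_ge_1, of k] minimum[of "x k \<omega>"] by simp

lemma expected_potential_nonneg: "expected_potential k \<ge> 0"
  unfolding expected_potential_def
  by (intro integral_nonneg_AE AE_I2 order_trans[OF _ dist_sq_le_potential])
    (use Lpos in \<open>auto intro: mult_nonneg_nonneg\<close>)

lemma expected_potential_0:
  "2 * expected_potential 0 = normL_sq L (x0 - xs) + 2 * (1 - 1 / real n) * (f x0 - f xs)"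
proof -
  have "expected_potential 0 = (\<integral>\<omega>. (1 - 1 / real n) * (f x0 - f xs) + L / 2 * norm (x0 - xs)^2 \<partial>M)"
    unfolding expected_potential_def potential_def
    by (rule Bochner_Integration.integral_cong[OF refl]) (simp add: init mtm_A_0)
  also have "\<dots> = (1 - 1 / real n) * (f x0 - f xs) + L / 2 * norm (x0 - xs)^2" by (simp add: prob_space)
  finally have "expected_potential 0 = (1 - 1 / real n) * (f x0 - f xs) + L / 2 * norm (x0 - xs)^2" .
  then show ?thesis unfolding normL_sq_eq by simp
qed

lemma half_expected_normL_sq_le: "1 / 2 * (\<integral>\<omega>. normL_sq L (u k \<omega> - xs) \<partial>M) \<le> expected_potential k"
proof -
  have "(\<integral>\<omega>. L / 2 * norm (u k \<omega> - xs)^2 \<partial>M) \<le> expected_potential k"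
    unfolding expected_potential_def using integrable_dist_sq integrable_potential dist_sq_le_potential
    by (intro integral_mono) auto
  then show ?thesis by (simp add: normL_sq_eq)
qed

lemma suboptimality_y_Suc_le:
  assumes \<omega>: "\<omega> \<in> space M"
  shows "mtm_A n (Suc k) * (f (y (Suc k) \<omega>) - f xs) \<le> (1 + mtm_alpha n (Suc k)) * potential k \<omega>"
proof -
  let ?a = "mtm_alpha n (Suc k)" and ?A' = "mtm_A n k" and ?A = "mtm_A n (Suc k)"
  have pos: "?a > 0" "?A' \<ge> 0" "?A > 0" and A: "?A = ?A' + ?a"
    using alpha_pos mtm_A_nonneg[OF n_ge_1] A_Suc_pos mtm_A_Suc by auto
  have "y (Suc k) \<omega> = (1 - ?A' / ?A) *\<^sub>R u k \<omega> + (?A' / ?A) *\<^sub>R x k \<omega>"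
    unfolding y_step[OF \<omega>] using pos A by (simp add: field_simps)
  then have "f (y (Suc k) \<omega>) \<le> (?a / ?A) * f (u k \<omega>) + (?A' / ?A) * f (x k \<omega>)"
    using convex_onD[OF convex, of "?A' / ?A" "u k \<omega>" "x k \<omega>"] pos A by (simp add: field_simps)
  then have "?A * f (y (Suc k) \<omega>) \<le> ?a * f (u k \<omega>) + ?A' * f (x k \<omega>)"
    using pos by (simp add: field_simps)
  then have "?A * (f (y (Suc k) \<omega>) - f xs) \<le> ?a * (f (u k \<omega>) - f xs) + ?A' * (f (x k \<omega>) - f xs)"
    unfolding A by (simp add: algebra_simps)
  also have "\<dots> \<le> ?a * (L / 2 * norm (u k \<omega> - xs)^2) + ?A' * (f (x k \<omega>) - f xs)"
    using suboptimality_le[of "u k \<omega>"] pos by (intro add_right_mono mult_left_mono) auto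
  also have "\<dots> \<le> (1 + ?a) * potential k \<omega>"
  proof -
    define X where "X = ?A' * (f (x k \<omega>) - f xs)"
    define Y where "Y = L / 2 * norm (u k \<omega> - xs)^2"
    have "0 \<le> X" "0 \<le> Y" unfolding X_def Y_def using pos minimum[of "x k \<omega>"] Lpos by auto
    then have "?a * Y + X \<le> (?a * Y + X) + (?a * X + Y)" using pos by simp
    also have "\<dots> = (1 + ?a) * (X + Y)" by (simp add: algebra_simps)
    finally show ?thesis unfolding potential_def X_def Y_def by (simp add: mult_ac)
  qed
  finally show ?thesis .
qed

lemma norm_gradf_y_Suc_sq_le:
  assumes \<omega>: "\<omega> \<in> space M"
  shows "norm (gradf (y (Suc k) \<omega>))^2
    \<le> 2 * L * (1 + mtm_alpha n (Suc k)) / mtm_A n (Suc k) * potential k \<omega>"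
proof -
  have "f (y (Suc k) \<omega>) - f xs \<le> (1 + mtm_alpha n (Suc k)) / mtm_A n (Suc k) * potential k \<omega>"
    using suboptimality_y_Suc_le[OF \<omega>, of k] A_Suc_pos[of k] by (simp add: field_simps)
  then have "2 * L * (f (y (Suc k) \<omega>) - f xs)
      \<le> 2 * L * ((1 + mtm_alpha n (Suc k)) / mtm_A n (Suc k) * potential k \<omega>)"
    using Lpos by (intro mult_left_mono) auto
  with norm_gradf_sq_le[of "y (Suc k) \<omega>"] show ?thesis by simp
qed

lemma expected_norm_gradf_y_Suc_sq_le:
  "(\<integral>\<omega>. norm (gradf (y (Suc k) \<omega>))^2 \<partial>M)
    \<le> 2 * L * (1 + mtm_alpha n (Suc k)) / mtm_A n (Suc k) * expected_potential k"
proof -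
  have "(\<integral>\<omega>. norm (gradf (y (Suc k) \<omega>))^2 \<partial>M)
      \<le> (\<integral>\<omega>. 2 * L * (1 + mtm_alpha n (Suc k)) / mtm_A n (Suc k) * potential k \<omega> \<partial>M)"
    using integrable_norm_gradf_y_Suc_sq integrable_potential[of k]
    by (intro integral_mono norm_gradf_y_Suc_sq_le) auto
  then show ?thesis unfolding expected_potential_def by simp
qed

lemma expected_dist_sq_le: "(\<integral>\<omega>. norm (u k \<omega> - xs)^2 \<partial>M) \<le> 2 / L * expected_potential k"
proof -
  have "(\<integral>\<omega>. norm (u k \<omega> - xs)^2 \<partial>M) \<le> (\<integral>\<omega>. 2 / L * potential k \<omega> \<partial>M)"
    using integrable_dist_sq integrable_potential[of k] dist_sq_le_potential[of k] Lpos
    by (intro integral_mono) (auto simp: field_simps)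
  then show ?thesis unfolding expected_potential_def by simp
qed

lemma potential_Suc_le:
  fixes k :: nat and \<omega> :: 'w and \<beta>\<^sub>0 \<beta>\<^sub>1 :: real
  defines "G \<equiv> gradf (y (Suc k) \<omega>)" and "v \<equiv> e (Suc k) \<omega>" and "w \<equiv> u k \<omega> - xs"
    and "a \<equiv> mtm_alpha n (Suc k)"
  assumes \<omega>: "\<omega> \<in> space M" and \<beta>: "\<beta>\<^sub>0 > 0" "\<beta>\<^sub>1 > 0"
  shows "potential (Suc k) \<omega> \<le> potential k \<omega> + a * inner G w - a * real n * (inner G v * inner v w)
     + real n^2 * a^2 / L * \<delta> / (2 * \<beta>\<^sub>0) * (inner G v * inner v G)
     + a * real n * \<delta> / (2 * \<beta>\<^sub>1) * (inner w v * inner v w)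
     + (real n^2 * a^2 / L * \<delta> * \<beta>\<^sub>0 / 2 + real n^2 * a^2 / L * \<delta>^2 + a * real n * \<delta> * \<beta>\<^sub>1 / 2)"
proof -
  define c\<^sub>1 where "c\<^sub>1 = real n^2 * a^2 / L"
  define c\<^sub>2 where "c\<^sub>2 = a * real n * \<delta>"
  have "potential (Suc k) \<omega> \<le> potential k \<omega> + a * inner (G - (real n * inner G v) *\<^sub>R v) w
      + c\<^sub>1 * (\<bar>inner G v\<bar> * \<delta> + \<delta>^2) + c\<^sub>2 * \<bar>inner v w\<bar>"
    unfolding potential_def G_def v_def w_def a_def c\<^sub>1_def c\<^sub>2_def
    using u_Suc[OF \<omega>, of k] unfolding grad_estimate_def
    by (intro triangle_step_potential_le[OF descent tangent Lpos alpha_pos mtm_A_nonneg[OF n_ge_1]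
        mtm_A_Suc mtm_alpha_sq_le_A[OF n_ge_1] _ dt_bound[OF \<omega>, of k] e_sphere[OF \<omega>, of k] y_step[OF \<omega>]
        _ x_step[OF \<omega>]]) (simp_all add: mult.assoc)
  moreover have "c\<^sub>1 * (\<bar>inner G v\<bar> * \<delta>)
      \<le> c\<^sub>1 * \<delta> / (2 * \<beta>\<^sub>0) * (inner G v * inner v G) + c\<^sub>1 * \<delta> * \<beta>\<^sub>0 / 2"
  proof -
    have "c\<^sub>1 * (\<bar>inner G v\<bar> * \<delta>) \<le> c\<^sub>1 * (((inner G v)^2 / \<beta>\<^sub>0 + \<beta>\<^sub>0) / 2 * \<delta>)"
      unfolding c\<^sub>1_def using abs_le_half_sq_div_add[OF \<beta>(1)] Lpos delta_nonneg
      by (intro mult_left_mono mult_right_mono) auto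
    then show ?thesis using \<beta> by (simp add: inner_commute power2_eq_square field_simps)
  qed
  moreover have "c\<^sub>2 * \<bar>inner v w\<bar> \<le> c\<^sub>2 / (2 * \<beta>\<^sub>1) * (inner w v * inner v w) + c\<^sub>2 * \<beta>\<^sub>1 / 2"
  proof -
    have "c\<^sub>2 * \<bar>inner v w\<bar> \<le> c\<^sub>2 * (((inner v w)^2 / \<beta>\<^sub>1 + \<beta>\<^sub>1) / 2)"
      unfolding c\<^sub>2_def using abs_le_half_sq_div_add[OF \<beta>(2)] alpha_pos[of k] delta_nonneg
      unfolding a_def by (intro mult_left_mono) auto
    then show ?thesis using \<beta> by (simp add: inner_commute power2_eq_square field_simps)
  qed
  moreover have "inner (G - (real n * inner G v) *\<^sub>R v) w = inner G w - real n * (inner G v * inner v w)"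
    by (simp add: inner_diff_left)
  ultimately show ?thesis unfolding c\<^sub>1_def[symmetric] c\<^sub>2_def[symmetric] by (simp add: algebra_simps)
qed

lemma integrable_step_products:
  fixes k :: nat
  defines "G \<equiv> \<lambda>\<omega>. gradf (y (Suc k) \<omega>)" and "v \<equiv> e (Suc k)" and "w \<equiv> \<lambda>\<omega>. u k \<omega> - xs"
  shows "integrable M (\<lambda>\<omega>. inner (G \<omega>) (w \<omega>))"
    and "integrable M (\<lambda>\<omega>. inner (G \<omega>) (v \<omega>) * inner (v \<omega>) (w \<omega>))"
    and "integrable M (\<lambda>\<omega>. inner (G \<omega>) (v \<omega>) * inner (v \<omega>) (G \<omega>))"
    and "integrable M (\<lambda>\<omega>. inner (w \<omega>) (v \<omega>) * inner (v \<omega>) (w \<omega>))"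
  unfolding G_def v_def w_def
  by (rule integrable_step_variables[of "\<lambda>p. inner (fst p) (snd (snd p))", simplified]
      integrable_step_variables[of "\<lambda>p. inner (fst p) (fst (snd p)) * inner (fst (snd p)) (snd (snd p))",
        simplified]
      integrable_step_variables[of "\<lambda>p. inner (fst p) (fst (snd p)) * inner (fst (snd p)) (fst p)",
        simplified]
      integrable_step_variables[of "\<lambda>p. inner (snd (snd p)) (fst (snd p)) * inner (fst (snd p)) (snd (snd p))",
        simplified];
      intro continuous_intros)+

lemma expected_step_products:
  fixes k :: nat
  defines "G \<equiv> \<lambda>\<omega>. gradf (y (Suc k) \<omega>)" and "v \<equiv> e (Suc k)" and "w \<equiv> \<lambda>\<omega>. u k \<omega> - xs"
  shows "(\<integral>\<omega>. inner (G \<omega>) (v \<omega>) * inner (v \<omega>) (w \<omega>) \<partial>M) = 1 / real n * (\<integral>\<omega>. inner (G \<omega>) (w \<omega>) \<partial>M)"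
    and "(\<integral>\<omega>. inner (G \<omega>) (v \<omega>) * inner (v \<omega>) (G \<omega>) \<partial>M) = 1 / real n * (\<integral>\<omega>. norm (G \<omega>)^2 \<partial>M)"
    and "(\<integral>\<omega>. inner (w \<omega>) (v \<omega>) * inner (v \<omega>) (w \<omega>) \<partial>M) = 1 / real n * (\<integral>\<omega>. norm (w \<omega>)^2 \<partial>M)"
proof -
  obtain B where "\<And>\<omega>. \<omega> \<in> space M \<Longrightarrow> norm (G \<omega>) \<le> B \<and> norm (w \<omega>) \<le> B"
    unfolding G_def w_def using step_variables_bounded by blast
  then have BG: "\<And>\<omega>. \<omega> \<in> space M \<Longrightarrow> norm (G \<omega>) \<le> B"
    and Bw: "\<And>\<omega>. \<omega> \<in> space M \<Longrightarrow> norm (w \<omega>) \<le> B" by auto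
  have GF: "G \<in> borel_measurable (F k)" unfolding G_def by (rule gradf_y_Suc_measurable)
  have wF: "w \<in> borel_measurable (F k)" unfolding w_def using u_measurable by measurable
  show "(\<integral>\<omega>. inner (G \<omega>) (v \<omega>) * inner (v \<omega>) (w \<omega>) \<partial>M) = 1 / real n * (\<integral>\<omega>. inner (G \<omega>) (w \<omega>) \<partial>M)"
    unfolding v_def by (rule integral_inner_e_Suc_isotropic[OF GF wF BG Bw])
  show "(\<integral>\<omega>. inner (G \<omega>) (v \<omega>) * inner (v \<omega>) (G \<omega>) \<partial>M) = 1 / real n * (\<integral>\<omega>. norm (G \<omega>)^2 \<partial>M)"
    unfolding v_def power2_norm_eq_inner by (rule integral_inner_e_Suc_isotropic[OF GF GF BG BG])
  show "(\<integral>\<omega>. inner (w \<omega>) (v \<omega>) * inner (v \<omega>) (w \<omega>) \<partial>M) = 1 / real n * (\<integral>\<omega>. norm (w \<omega>)^2 \<partial>M)"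
    unfolding v_def power2_norm_eq_inner by (rule integral_inner_e_Suc_isotropic[OF wF wF Bw Bw])
qed

lemma expected_potential_Suc_le_aux:
  fixes k :: nat and \<beta>\<^sub>0 \<beta>\<^sub>1 :: real
  defines "a \<equiv> mtm_alpha n (Suc k)"
  defines "c\<^sub>1 \<equiv> real n^2 * a^2 / L" and "c\<^sub>2 \<equiv> a * real n * \<delta>"
  assumes \<beta>: "\<beta>\<^sub>0 > 0" "\<beta>\<^sub>1 > 0"
  shows "expected_potential (Suc k) \<le> expected_potential k
    + c\<^sub>1 * \<delta> / (2 * \<beta>\<^sub>0) * (1 / real n * (\<integral>\<omega>. norm (gradf (y (Suc k) \<omega>))^2 \<partial>M))
    + c\<^sub>2 / (2 * \<beta>\<^sub>1) * (1 / real n * (\<integral>\<omega>. norm (u k \<omega> - xs)^2 \<partial>M))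
    + (c\<^sub>1 * \<delta> * \<beta>\<^sub>0 / 2 + c\<^sub>1 * \<delta>^2 + c\<^sub>2 * \<beta>\<^sub>1 / 2)"
proof -
  define G where "G \<omega> = gradf (y (Suc k) \<omega>)" for \<omega>
  define v where "v \<omega> = e (Suc k) \<omega>" for \<omega>
  define w where "w \<omega> = u k \<omega> - xs" for \<omega>
  define R where "R \<omega> = potential k \<omega> + a * inner (G \<omega>) (w \<omega>)
      - a * real n * (inner (G \<omega>) (v \<omega>) * inner (v \<omega>) (w \<omega>))
      + c\<^sub>1 * \<delta> / (2 * \<beta>\<^sub>0) * (inner (G \<omega>) (v \<omega>) * inner (v \<omega>) (G \<omega>))
      + c\<^sub>2 / (2 * \<beta>\<^sub>1) * (inner (w \<omega>) (v \<omega>) * inner (v \<omega>) (w \<omega>))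
      + (c\<^sub>1 * \<delta> * \<beta>\<^sub>0 / 2 + c\<^sub>1 * \<delta>^2 + c\<^sub>2 * \<beta>\<^sub>1 / 2)" for \<omega>
  note integrable = integrable_step_products[of k, folded G_def v_def w_def]
  have "expected_potential (Suc k) \<le> (\<integral>\<omega>. R \<omega> \<partial>M)"
    unfolding expected_potential_def R_def G_def v_def w_def c\<^sub>1_def c\<^sub>2_def a_def
    using integrable_potential[of k] integrable
    by (intro integral_mono integrable_potential potential_Suc_le[OF _ \<beta>])
      (simp_all add: G_def v_def w_def)
  also have "(\<integral>\<omega>. R \<omega> \<partial>M) = expected_potential k + a * (\<integral>\<omega>. inner (G \<omega>) (w \<omega>) \<partial>M)
      - a * real n * (\<integral>\<omega>. inner (G \<omega>) (v \<omega>) * inner (v \<omega>) (w \<omega>) \<partial>M)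
      + c\<^sub>1 * \<delta> / (2 * \<beta>\<^sub>0) * (\<integral>\<omega>. inner (G \<omega>) (v \<omega>) * inner (v \<omega>) (G \<omega>) \<partial>M)
      + c\<^sub>2 / (2 * \<beta>\<^sub>1) * (\<integral>\<omega>. inner (w \<omega>) (v \<omega>) * inner (v \<omega>) (w \<omega>) \<partial>M)
      + (c\<^sub>1 * \<delta> * \<beta>\<^sub>0 / 2 + c\<^sub>1 * \<delta>^2 + c\<^sub>2 * \<beta>\<^sub>1 / 2)"
    unfolding R_def expected_potential_def using integrable_potential[of k] integrable
    by (simp add: prob_space)
  also have "\<dots> = expected_potential k
      + c\<^sub>1 * \<delta> / (2 * \<beta>\<^sub>0) * (1 / real n * (\<integral>\<omega>. norm (G \<omega>)^2 \<partial>M))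
      + c\<^sub>2 / (2 * \<beta>\<^sub>1) * (1 / real n * (\<integral>\<omega>. norm (w \<omega>)^2 \<partial>M))
      + (c\<^sub>1 * \<delta> * \<beta>\<^sub>0 / 2 + c\<^sub>1 * \<delta>^2 + c\<^sub>2 * \<beta>\<^sub>1 / 2)"
    using expected_step_products[of k, folded G_def v_def w_def] n_ge_1 by simp
  finally show ?thesis unfolding G_def w_def .
qed

lemma expected_norm_gradf_y_Suc_sq_le_sq:
  assumes hyp: "expected_potential k \<le> P^2"
  shows "(\<integral>\<omega>. norm (gradf (y (Suc k) \<omega>))^2 \<partial>M)
    \<le> 2 * L * P^2 * (1 + sqrt (mtm_alpha n (Suc k)))^2 / (real n^2 * mtm_alpha n (Suc k)^2)"
proof -
  let ?a = "mtm_alpha n (Suc k)" and ?A = "mtm_A n (Suc k)"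
  have a: "?a > 0" and A: "?A > 0" and n: "real n \<ge> 1" using alpha_pos A_Suc_pos n_ge_1 by auto
  have "0 \<le> 2 * L * (1 + ?a) / ?A" using Lpos a A by simp
  from order_trans[OF expected_norm_gradf_y_Suc_sq_le mult_left_mono[OF hyp this]]
  have "(\<integral>\<omega>. norm (gradf (y (Suc k) \<omega>))^2 \<partial>M) \<le> 2 * L * (1 + ?a) / ?A * P^2" .
  also have "\<dots> = 2 * L * P^2 * (1 + ?a) * (1 / ?A)" by simp
  also have "\<dots> \<le> 2 * L * P^2 * (1 + sqrt ?a)^2 * (1 / (real n^2 * ?a^2))"
  proof (rule mult_mono)
    have "1 + ?a \<le> (1 + sqrt ?a)^2" using a by (simp add: power2_eq_square algebra_simps)
    then show "2 * L * P^2 * (1 + ?a) \<le> 2 * L * P^2 * (1 + sqrt ?a)^2"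
      using Lpos by (intro mult_left_mono) auto
    show "1 / ?A \<le> 1 / (real n^2 * ?a^2)"
      using mtm_alpha_sq_le_A[OF n_ge_1, of k] n a A by (intro divide_left_mono) auto
  qed (use Lpos A in auto)
  finally show ?thesis by simp
qed

lemma expected_potential_Suc_le:
  assumes hyp: "expected_potential k \<le> P^2" and P: "P > 0"
  shows "expected_potential (Suc k)
    \<le> expected_potential k + mtm_step_error n L \<delta> P (mtm_alpha n (Suc k))"
proof -
  let ?a = "mtm_alpha n (Suc k)"
  define s where "s = sqrt (2 * real n / L)"
  \<comment> \<open>Each weight squared is the bound on the second moment it is paired with in the AM-GM split.\<close>
  define \<beta>\<^sub>0 where "\<beta>\<^sub>0 = L * s * P * (1 + sqrt ?a) / (real n^2 * ?a)"
  define \<beta>\<^sub>1 where "\<beta>\<^sub>1 = s * P / real n"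
  define c\<^sub>1 where "c\<^sub>1 = real n^2 * ?a^2 / L"
  define c\<^sub>2 where "c\<^sub>2 = ?a * real n * \<delta>"
  have n: "real n \<ge> 1" using n_ge_1 by simp
  have a: "?a > 0" by (rule alpha_pos)
  have s: "s > 0" "s^2 = 2 * real n / L" unfolding s_def using n Lpos by auto
  have \<beta>: "\<beta>\<^sub>0 > 0" "\<beta>\<^sub>1 > 0"
    unfolding \<beta>\<^sub>0_def \<beta>\<^sub>1_def using s a P Lpos n
    by (auto intro!: divide_pos_pos mult_pos_pos add_pos_nonneg)
  have c: "c\<^sub>1 \<ge> 0" "c\<^sub>2 \<ge> 0" unfolding c\<^sub>1_def c\<^sub>2_def using Lpos a delta_nonneg by auto
  have "\<beta>\<^sub>0^2 = L^2 * s^2 * P^2 * (1 + sqrt ?a)^2 / ((real n^2)^2 * ?a^2)"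
    unfolding \<beta>\<^sub>0_def by (simp add: power_divide power_mult_distrib)
  also have "\<dots> = 1 / real n * (2 * L * P^2 * (1 + sqrt ?a)^2 / (real n^2 * ?a^2))"
    unfolding s(2) using n Lpos
    by (simp add: field_simps power2_eq_square[of L] power2_eq_square[of "real n"])
  finally have grad: "1 / real n * (\<integral>\<omega>. norm (gradf (y (Suc k) \<omega>))^2 \<partial>M) \<le> \<beta>\<^sub>0^2"
    using expected_norm_gradf_y_Suc_sq_le_sq[OF hyp] by (simp only:) (intro mult_left_mono; simp)
  have "\<beta>\<^sub>1^2 = 1 / real n * (2 / L * P^2)"
    unfolding \<beta>\<^sub>1_def using s n Lpos
    by (simp add: power_divide power_mult_distrib field_simps power2_eq_square[of "real n"])
  then have dist: "1 / real n * (\<integral>\<omega>. norm (u k \<omega> - xs)^2 \<partial>M) \<le> \<beta>\<^sub>1^2"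
    using order_trans[OF expected_dist_sq_le mult_left_mono[OF hyp]] Lpos
    by (simp only:) (intro mult_left_mono; simp)
  have "expected_potential (Suc k) \<le> expected_potential k
      + c\<^sub>1 * \<delta> / (2 * \<beta>\<^sub>0) * \<beta>\<^sub>0^2 + c\<^sub>2 / (2 * \<beta>\<^sub>1) * \<beta>\<^sub>1^2
      + (c\<^sub>1 * \<delta> * \<beta>\<^sub>0 / 2 + c\<^sub>1 * \<delta>^2 + c\<^sub>2 * \<beta>\<^sub>1 / 2)"
    using expected_potential_Suc_le_aux[OF \<beta>, of k] grad dist c \<beta> delta_nonneg
    unfolding c\<^sub>1_def[symmetric] c\<^sub>2_def[symmetric]
    by (smt (verit) divide_nonneg_pos mult_left_mono mult_nonneg_nonneg)
  also have "\<dots> = expected_potential k + c\<^sub>1 * \<delta> * \<beta>\<^sub>0 + c\<^sub>1 * \<delta>^2 + c\<^sub>2 * \<beta>\<^sub>1"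
    using \<beta> by (simp add: power2_eq_square field_simps)
  also have "c\<^sub>1 * \<delta> * \<beta>\<^sub>0 = ?a * \<delta> * P * s * (1 + sqrt ?a)"
    unfolding c\<^sub>1_def \<beta>\<^sub>0_def using n a Lpos by (simp add: power2_eq_square field_simps)
  also have "c\<^sub>2 * \<beta>\<^sub>1 = ?a * \<delta> * P * s"
    unfolding c\<^sub>2_def \<beta>\<^sub>1_def using n by (simp add: field_simps)
  finally show ?thesis
    unfolding mtm_step_error_def s_def[symmetric] c\<^sub>1_def by (simp add: algebra_simps)
qed

lemma expected_potential_Suc_le_budget:
  assumes "expected_potential k \<le> P^2" and P: "P > 0"
    and T: "T \<ge> real n" "mtm_alpha n (Suc k) \<le> T / real n^2"
    and \<delta>: "(T / real n)^3 * \<delta> \<le> sqrt 2 * P * sqrt L / (48 * sqrt (real n))"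
  shows "expected_potential (Suc k) \<le> expected_potential k + P^2 / (2 * T)"
proof -
  have "T * mtm_step_error n L \<delta> P (mtm_alpha n (Suc k)) \<le> P^2 / 2"
    by (rule mtm_step_error_budget[OF n_ge_1 Lpos P delta_nonneg less_imp_le[OF alpha_pos] T \<delta>])
  moreover have "T > 0" using T n_ge_1 by simp
  ultimately have "mtm_step_error n L \<delta> P (mtm_alpha n (Suc k)) \<le> P^2 / (2 * T)"
    by (simp add: field_simps)
  with expected_potential_Suc_le[OF assms(1) P] show ?thesis by linarith
qed

end

theorem lemma15:
  fixes f :: "real ^ 'n \<Rightarrow> real"
    and gradf :: "real ^ 'n \<Rightarrow> real ^ 'n"
    and L \<epsilon> \<delta> :: real
    and xs x0 :: "real ^ 'n"
    and M :: "'w measure"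
    and F :: "nat \<Rightarrow> 'w measure"
    and e :: "nat \<Rightarrow> 'w \<Rightarrow> real ^ 'n"
    and dt :: "nat \<Rightarrow> 'w \<Rightarrow> real"
    and x y u :: "nat \<Rightarrow> 'w \<Rightarrow> real ^ 'n"
    and K :: nat
  defines "n \<equiv> CARD('n)"
  defines "P0 \<equiv> sqrt (normL_sq L (x0 - xs) + 2 * (1 - 1 / real n) * (f x0 - f xs))"
  defines "N \<equiv> \<lceil>sqrt 2 * real n * P0 / sqrt \<epsilon> + 1 - 2 * real n\<rceil>"
  assumes convex: "convex_on UNIV f"
    and grad: "\<And>z. GDERIV f z :> gradf z"
    and Lpos: "L > 0"
    and lipschitz: "\<And>z w. norm (gradf z - gradf w) \<le> L * norm (z - w)"
    and minimum: "\<And>z. f xs \<le> f z"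
    and prob: "prob_space M"
    and subalg: "\<And>k. subalgebra M (F k)"
    and filt_mono: "\<And>k. sets (F k) \<subseteq> sets (F (Suc k))"
    and e_meas: "\<And>k. e (Suc k) \<in> borel_measurable (F (Suc k))"
    and dt_meas: "\<And>k. dt (Suc k) \<in> borel_measurable (F (Suc k))"
    and e_sphere: "\<And>k \<omega>. \<omega> \<in> space M \<Longrightarrow> norm (e (Suc k) \<omega>) = 1"
    and e_cov: "\<And>k i j. AE \<omega> in M.
        real_cond_exp M (F k) (\<lambda>\<omega>. e (Suc k) \<omega> $ i * e (Suc k) \<omega> $ j) \<omega>
          = (if i = j then 1 / real n else 0)"
    and dt_bound: "\<And>k \<omega>. \<omega> \<in> space M \<Longrightarrow> \<bar>dt (Suc k) \<omega>\<bar> \<le> \<delta>"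
    and init: "\<And>\<omega>. \<omega> \<in> space M \<Longrightarrow> x 0 \<omega> = x0 \<and> u 0 \<omega> = x0 \<and> y 0 \<omega> = x0"
    and y_step: "\<And>k \<omega>. \<omega> \<in> space M \<Longrightarrow>
        y (Suc k) \<omega> = (1 / mtm_A n (Suc k)) *\<^sub>R
          (mtm_alpha n (Suc k) *\<^sub>R u k \<omega> + mtm_A n k *\<^sub>R x k \<omega>)"
    and u_step: "\<And>k \<omega> z. \<omega> \<in> space M \<Longrightarrow>
        (1/2) * normL_sq L (u (Suc k) \<omega> - u k \<omega>)
          + mtm_alpha n (Suc k) * inner
              ((real n * (inner (gradf (y (Suc k) \<omega>)) (e (Suc k) \<omega>) + dt (Suc k) \<omega>))
                 *\<^sub>R e (Suc k) \<omega>) (u (Suc k) \<omega>)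
        \<le> (1/2) * normL_sq L (z - u k \<omega>)
          + mtm_alpha n (Suc k) * inner
              ((real n * (inner (gradf (y (Suc k) \<omega>)) (e (Suc k) \<omega>) + dt (Suc k) \<omega>))
                 *\<^sub>R e (Suc k) \<omega>) z"
    and x_step: "\<And>k \<omega>. \<omega> \<in> space M \<Longrightarrow>
        x (Suc k) \<omega> = y (Suc k) \<omega>
          + (real n * mtm_alpha n (Suc k) / mtm_A n (Suc k)) *\<^sub>R (u (Suc k) \<omega> - u k \<omega>)"
    and eps_pos: "\<epsilon> > 0"
    and N_ge: "N \<ge> 1"
    and delta_le: "\<delta> \<le> min (\<epsilon> powr (3/4) * sqrt L / (4 * root 4 2 * sqrt (real n * P0)))
                          (\<epsilon> powr (3/2) * sqrt L / (96 * sqrt (real n) * P0 ^ 2))"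
    and K_le: "int K \<le> N"
  shows "(1/2) * (\<integral>\<omega>. normL_sq L (u K \<omega> - xs) \<partial>M) \<le> P0 ^ 2"
proof -
  interpret inexact_mtm n f gradf L \<delta> xs x0 M F e dt x y u
    by (rule inexact_mtm.intro) (fact | simp only: n_def)+
  define T where "T = sqrt 2 * real n * P0 / sqrt \<epsilon>"
  have n: "n \<ge> 1" by (rule n_ge_1)
  have P0_sq: "P0^2 = 2 * expected_potential 0"
    unfolding P0_def expected_potential_0[symmetric] using expected_potential_nonneg[of 0] by simp
  have T: "T \<ge> real n" using N_ge n unfolding N_def T_def by (rule horizon_ge_dim)
  have "P0 \<ge> 0"
    unfolding P0_def expected_potential_0[symmetric] using expected_potential_nonneg[of 0] by simp
  then have P0: "P0 > 0" using T n unfolding T_def by (cases "P0 = 0") auto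
  have "expected_potential K \<le> P0^2"
  proof (rule bootstrap_bound[where E = "P0^2 / (2 * T)"])
    show "expected_potential 0 \<le> P0^2 / 2" using P0_sq by simp
    show "0 \<le> P0^2 / (2 * T)" using T n by simp
    show "real K * (P0^2 / (2 * T)) \<le> P0^2 / 2"
      using iteration_le_horizon[OF K_le[unfolded N_def T_def[symmetric]] n] T n
      by (simp add: field_simps mult_right_mono)
    fix k assume "k < K" "expected_potential k \<le> P0^2"
    moreover have "mtm_alpha n (Suc k) \<le> T / real n^2"
      using \<open>k < K\<close> K_le T n unfolding N_def T_def by (intro alpha_le_horizon) auto
    moreover have "(T / real n)^3 * \<delta> \<le> sqrt 2 * P0 * sqrt L / (48 * sqrt (real n))"
      unfolding T_def using eps_pos P0 n order_trans[OF delta_le min.cobounded2] by (rule delta_le_scaled)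
    ultimately show "expected_potential (Suc k) \<le> expected_potential k + P0^2 / (2 * T)"
      using expected_potential_Suc_le_budget P0 T by blast
  qed
  then show ?thesis using half_expected_normL_sq_le[of K] by simp
qed

end
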